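(* Let $\mathcal{A}$ be an additive category and let $(\mathcal{E}_\omega)_{\omega\in\Omega}$ be a nonempty family of exact structures on $\mathcal{A}$. Then the intersection $\bigcap_{\omega\in\Omega}\mathcal{E}_\omega=\{\xi : \xi\in\mathcal{E}_\omega\text{ for all }\omega\in\Omega\}$ is an exact structure on $\mathcal{A}$.
   Context: An exact structure (in the sense of Quillen) on an additive category $\mathcal{A}$ is a class $\mathcal{E}$ of kernel–cokernel pairs $(i,d)$ (i.e. $i$ is a kernel of $d$ and $d$ is a cokernel of $i$), closed under isomorphisms, such that: identities are admissible monics and admissible epics; admissible monics are closed under composition, and so are admissible epics; the pushout of an admissible monic along an arbitrary morphism exists and is an admissible monic; the pullback of an admissible epic along an arbitrary morphism exists and is an admissible epic. Here an admissible monic is a morphism $i$ with $(i,d)\in\mathcal{E}$ for some $d$, and an admissible epic is a morphism $d$ with $(i,d)\in\mathcal{E}$ for some $i$. *)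

theory Defs
  imports Main
begin

text \<open>An additive category presented concretely: a type of objects, a type of
  morphisms, the set of objects and morphisms, domain/codomain, composition
  (cmp g f = g after f), identities, and the abelian group structure on hom-sets
  (addition, negation, zero morphisms).\<close>

record ('o, 'm) addcat =
  Ob  :: "'o set"
  Mor :: "'m set"
  dom :: "'m \<Rightarrow> 'o"
  cod :: "'m \<Rightarrow> 'o"
  cmp :: "'m \<Rightarrow> 'm \<Rightarrow> 'm"
  idm :: "'o \<Rightarrow> 'm"
  add :: "'m \<Rightarrow> 'm \<Rightarrow> 'm"
  neg :: "'m \<Rightarrow> 'm"
  zer :: "'o \<Rightarrow> 'o \<Rightarrow> 'm"

definition hom :: "('o, 'm, 'x) addcat_scheme \<Rightarrow> 'o \<Rightarrow> 'o \<Rightarrow> 'm set" where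
  "hom C a b = {f \<in> Mor C. dom C f = a \<and> cod C f = b}"

definition category :: "('o, 'm, 'x) addcat_scheme \<Rightarrow> bool" where
  "category C \<longleftrightarrow>
     (\<forall>f \<in> Mor C. dom C f \<in> Ob C \<and> cod C f \<in> Ob C) \<and>
     (\<forall>a \<in> Ob C. idm C a \<in> hom C a a) \<and>
     (\<forall>a \<in> Ob C. \<forall>b \<in> Ob C. \<forall>c \<in> Ob C. \<forall>f \<in> hom C a b. \<forall>g \<in> hom C b c.
        cmp C g f \<in> hom C a c) \<and>
     (\<forall>f \<in> Mor C. cmp C f (idm C (dom C f)) = f \<and> cmp C (idm C (cod C f)) f = f) \<and>
     (\<forall>f \<in> Mor C. \<forall>g \<in> Mor C. \<forall>h \<in> Mor C. cod C f = dom C g \<longrightarrow> cod C g = dom C h \<longrightarrow>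
        cmp C h (cmp C g f) = cmp C (cmp C h g) f)"

definition preadditive :: "('o, 'm, 'x) addcat_scheme \<Rightarrow> bool" where
  "preadditive C \<longleftrightarrow> category C \<and>
     (\<forall>a \<in> Ob C. \<forall>b \<in> Ob C.
        zer C a b \<in> hom C a b \<and>
        (\<forall>f \<in> hom C a b. \<forall>g \<in> hom C a b. add C f g \<in> hom C a b) \<and>
        (\<forall>f \<in> hom C a b. neg C f \<in> hom C a b) \<and>
        (\<forall>f \<in> hom C a b. \<forall>g \<in> hom C a b. \<forall>h \<in> hom C a b.
            add C (add C f g) h = add C f (add C g h)) \<and>
        (\<forall>f \<in> hom C a b. \<forall>g \<in> hom C a b. add C f g = add C g f) \<and>
        (\<forall>f \<in> hom C a b. add C f (zer C a b) = f) \<and>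
        (\<forall>f \<in> hom C a b. add C f (neg C f) = zer C a b)) \<and>
     (\<forall>a \<in> Ob C. \<forall>b \<in> Ob C. \<forall>c \<in> Ob C.
        \<forall>f \<in> hom C a b. \<forall>f' \<in> hom C a b. \<forall>g \<in> hom C b c. \<forall>g' \<in> hom C b c.
          cmp C g (add C f f') = add C (cmp C g f) (cmp C g f') \<and>
          cmp C (add C g g') f = add C (cmp C g f) (cmp C g' f))"

definition zero_object :: "('o, 'm, 'x) addcat_scheme \<Rightarrow> 'o \<Rightarrow> bool" where
  "zero_object C z \<longleftrightarrow> z \<in> Ob C \<and>
     (\<forall>a \<in> Ob C. (\<exists>!f. f \<in> hom C z a) \<and> (\<exists>!f. f \<in> hom C a z))"

definition is_biproduct :: "('o, 'm, 'x) addcat_scheme \<Rightarrow> 'o \<Rightarrow> 'o \<Rightarrow> 'o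
    \<Rightarrow> 'm \<Rightarrow> 'm \<Rightarrow> 'm \<Rightarrow> 'm \<Rightarrow> bool" where
  "is_biproduct C a b c i1 i2 p1 p2 \<longleftrightarrow> c \<in> Ob C \<and>
     i1 \<in> hom C a c \<and> i2 \<in> hom C b c \<and> p1 \<in> hom C c a \<and> p2 \<in> hom C c b \<and>
     cmp C p1 i1 = idm C a \<and> cmp C p2 i2 = idm C b \<and>
     cmp C p1 i2 = zer C b a \<and> cmp C p2 i1 = zer C a b \<and>
     add C (cmp C i1 p1) (cmp C i2 p2) = idm C c"

definition additive_category :: "('o, 'm, 'x) addcat_scheme \<Rightarrow> bool" where
  "additive_category C \<longleftrightarrow> preadditive C \<and>
     (\<exists>z. zero_object C z) \<and>
     (\<forall>a \<in> Ob C. \<forall>b \<in> Ob C. \<exists>c i1 i2 p1 p2. is_biproduct C a b c i1 i2 p1 p2)"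

definition is_iso :: "('o, 'm, 'x) addcat_scheme \<Rightarrow> 'm \<Rightarrow> bool" where
  "is_iso C f \<longleftrightarrow> f \<in> Mor C \<and>
     (\<exists>g \<in> hom C (cod C f) (dom C f).
        cmp C g f = idm C (dom C f) \<and> cmp C f g = idm C (cod C f))"

definition is_kernel :: "('o, 'm, 'x) addcat_scheme \<Rightarrow> 'm \<Rightarrow> 'm \<Rightarrow> bool" where
  "is_kernel C i d \<longleftrightarrow> i \<in> Mor C \<and> d \<in> Mor C \<and> cod C i = dom C d \<and>
     cmp C d i = zer C (dom C i) (cod C d) \<and>
     (\<forall>x \<in> Ob C. \<forall>f \<in> hom C x (dom C d). cmp C d f = zer C x (cod C d) \<longrightarrow>
        (\<exists>!g. g \<in> hom C x (dom C i) \<and> cmp C i g = f))"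

definition is_cokernel :: "('o, 'm, 'x) addcat_scheme \<Rightarrow> 'm \<Rightarrow> 'm \<Rightarrow> bool" where
  "is_cokernel C d i \<longleftrightarrow> i \<in> Mor C \<and> d \<in> Mor C \<and> cod C i = dom C d \<and>
     cmp C d i = zer C (dom C i) (cod C d) \<and>
     (\<forall>x \<in> Ob C. \<forall>f \<in> hom C (cod C i) x. cmp C f i = zer C (dom C i) x \<longrightarrow>
        (\<exists>!g. g \<in> hom C (cod C d) x \<and> cmp C g d = f))"

definition kc_pair :: "('o, 'm, 'x) addcat_scheme \<Rightarrow> 'm \<times> 'm \<Rightarrow> bool" where
  "kc_pair C p \<longleftrightarrow> is_kernel C (fst p) (snd p) \<and> is_cokernel C (snd p) (fst p)"

definition kc_iso :: "('o, 'm, 'x) addcat_scheme \<Rightarrow> 'm \<times> 'm \<Rightarrow> 'm \<times> 'm \<Rightarrow> bool" where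
  "kc_iso C p q \<longleftrightarrow> (\<exists>\<alpha> \<beta> \<gamma>.
     \<alpha> \<in> hom C (dom C (fst p)) (dom C (fst q)) \<and>
     \<beta> \<in> hom C (cod C (fst p)) (cod C (fst q)) \<and>
     \<gamma> \<in> hom C (cod C (snd p)) (cod C (snd q)) \<and>
     is_iso C \<alpha> \<and> is_iso C \<beta> \<and> is_iso C \<gamma> \<and>
     cmp C (fst q) \<alpha> = cmp C \<beta> (fst p) \<and>
     cmp C (snd q) \<beta> = cmp C \<gamma> (snd p))"

definition adm_monic :: "('o, 'm, 'x) addcat_scheme \<Rightarrow> ('m \<times> 'm) set \<Rightarrow> 'm \<Rightarrow> bool" where
  "adm_monic C E i \<longleftrightarrow> (\<exists>d. (i, d) \<in> E)"

definition adm_epic :: "('o, 'm, 'x) addcat_scheme \<Rightarrow> ('m \<times> 'm) set \<Rightarrow> 'm \<Rightarrow> bool" where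
  "adm_epic C E d \<longleftrightarrow> (\<exists>i. (i, d) \<in> E)"

definition is_pushout :: "('o, 'm, 'x) addcat_scheme \<Rightarrow> 'm \<Rightarrow> 'm \<Rightarrow> 'm \<Rightarrow> 'm \<Rightarrow> bool" where
  "is_pushout C i f i' f' \<longleftrightarrow>
     i \<in> Mor C \<and> f \<in> Mor C \<and> i' \<in> Mor C \<and> f' \<in> Mor C \<and>
     dom C f = dom C i \<and> dom C i' = cod C f \<and> dom C f' = cod C i \<and> cod C i' = cod C f' \<and>
     cmp C i' f = cmp C f' i \<and>
     (\<forall>x \<in> Ob C. \<forall>g \<in> hom C (cod C f) x. \<forall>h \<in> hom C (cod C i) x.
        cmp C g f = cmp C h i \<longrightarrow>
        (\<exists>!u. u \<in> hom C (cod C i') x \<and> cmp C u i' = g \<and> cmp C u f' = h))"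

definition is_pullback :: "('o, 'm, 'x) addcat_scheme \<Rightarrow> 'm \<Rightarrow> 'm \<Rightarrow> 'm \<Rightarrow> 'm \<Rightarrow> bool" where
  "is_pullback C d f d' f' \<longleftrightarrow>
     d \<in> Mor C \<and> f \<in> Mor C \<and> d' \<in> Mor C \<and> f' \<in> Mor C \<and>
     cod C f = cod C d \<and> cod C d' = dom C f \<and> cod C f' = dom C d \<and> dom C d' = dom C f' \<and>
     cmp C f d' = cmp C d f' \<and>
     (\<forall>x \<in> Ob C. \<forall>g \<in> hom C x (dom C f). \<forall>h \<in> hom C x (dom C d).
        cmp C f g = cmp C d h \<longrightarrow>
        (\<exists>!u. u \<in> hom C x (dom C d') \<and> cmp C d' u = g \<and> cmp C f' u = h))"

definition exact_structure :: "('o, 'm, 'x) addcat_scheme \<Rightarrow> ('m \<times> 'm) set \<Rightarrow> bool" where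
  "exact_structure C E \<longleftrightarrow>
     (\<forall>p \<in> E. kc_pair C p) \<and>
     (\<forall>p \<in> E. \<forall>q. kc_pair C q \<and> kc_iso C p q \<longrightarrow> q \<in> E) \<and>
     (\<forall>a \<in> Ob C. adm_monic C E (idm C a) \<and> adm_epic C E (idm C a)) \<and>
     (\<forall>i i'. adm_monic C E i \<and> adm_monic C E i' \<and> cod C i = dom C i' \<longrightarrow>
        adm_monic C E (cmp C i' i)) \<and>
     (\<forall>d d'. adm_epic C E d \<and> adm_epic C E d' \<and> cod C d = dom C d' \<longrightarrow>
        adm_epic C E (cmp C d' d)) \<and>
     (\<forall>i f. adm_monic C E i \<and> f \<in> Mor C \<and> dom C f = dom C i \<longrightarrow>
        (\<exists>i' f'. is_pushout C i f i' f' \<and> adm_monic C E i')) \<and>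
     (\<forall>d f. adm_epic C E d \<and> f \<in> Mor C \<and> cod C f = cod C d \<longrightarrow>
        (\<exists>d' f'. is_pullback C d f d' f' \<and> adm_epic C E d'))"

end

theory Submission
  imports Defs
begin

text \<open>Membership in an exact structure is invariant under isomorphism of kernel-cokernel
  pairs, a kernel-cokernel pair is determined up to isomorphism by either of its morphisms,
  and pushouts and pullbacks are unique up to isomorphism. Hence whether a morphism is an
  admissible monic (epic), and whether the pushout (pullback) of one is again admissible,
  depends neither on the chosen partner morphism nor on the chosen pushout (pullback)
  square. So a partner chosen in one member of the family serves in all of them, and each
  axiom of an exact structure passes to the intersection.\<close>

definition inverse_homs :: "('o, 'm, 'x) addcat_scheme \<Rightarrow> 'm \<Rightarrow> 'm \<Rightarrow> 'o \<Rightarrow> 'o \<Rightarrow> bool" where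
  "inverse_homs C u v a b \<longleftrightarrow>
     u \<in> hom C a b \<and> v \<in> hom C b a \<and> cmp C v u = idm C a \<and> cmp C u v = idm C b"

lemma inverse_homs_sym: "inverse_homs C u v a b \<Longrightarrow> inverse_homs C v u b a"
  by (auto simp: inverse_homs_def)

lemma is_iso_if_inverse_homs: "inverse_homs C u v a b \<Longrightarrow> is_iso C u"
  unfolding is_iso_def inverse_homs_def by (auto simp: hom_def)

lemma kc_isoI:
  assumes "\<alpha> \<in> hom C (dom C i) (dom C i')" "\<beta> \<in> hom C (cod C i) (cod C i')"
    and "\<gamma> \<in> hom C (cod C d) (cod C d')"
    and "is_iso C \<alpha>" "is_iso C \<beta>" "is_iso C \<gamma>"
    and "cmp C i' \<alpha> = cmp C \<beta> i" "cmp C d' \<beta> = cmp C \<gamma> d"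
  shows "kc_iso C (i, d) (i', d')"
  unfolding kc_iso_def using assms by auto

lemma is_kernel_homs:
  "is_kernel C i d \<Longrightarrow> i \<in> hom C (dom C i) (cod C i) \<and> d \<in> hom C (cod C i) (cod C d)"
  unfolding is_kernel_def hom_def by auto

lemma is_cokernel_homs:
  "is_cokernel C d i \<Longrightarrow> i \<in> hom C (dom C i) (cod C i) \<and> d \<in> hom C (cod C i) (cod C d)"
  unfolding is_cokernel_def hom_def by auto

lemma is_kernel_zero:
  "is_kernel C i d \<Longrightarrow> i \<in> hom C a b \<Longrightarrow> d \<in> hom C b c \<Longrightarrow> cmp C d i = zer C a c"
  unfolding is_kernel_def hom_def by auto

lemma is_cokernel_zero:
  "is_cokernel C d i \<Longrightarrow> i \<in> hom C a b \<Longrightarrow> d \<in> hom C b c \<Longrightarrow> cmp C d i = zer C a c"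
  unfolding is_cokernel_def hom_def by auto

lemma is_kernel_factors:
  assumes "is_kernel C i d" "i \<in> hom C a b" "d \<in> hom C b c"
    and "x \<in> Ob C" "f \<in> hom C x b" "cmp C d f = zer C x c"
  shows "\<exists>!g. g \<in> hom C x a \<and> cmp C i g = f"
  using assms unfolding is_kernel_def hom_def by auto

lemma is_cokernel_factors:
  assumes "is_cokernel C d i" "i \<in> hom C a b" "d \<in> hom C b c"
    and "x \<in> Ob C" "f \<in> hom C b x" "cmp C f i = zer C a x"
  shows "\<exists>!g. g \<in> hom C c x \<and> cmp C g d = f"
  using assms unfolding is_cokernel_def hom_def by auto

lemma is_pushout_homs:
  "is_pushout C i f i' f' \<Longrightarrow>
     i \<in> hom C (dom C i) (cod C i) \<and> f \<in> hom C (dom C i) (cod C f) \<and>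
     i' \<in> hom C (cod C f) (cod C i') \<and> f' \<in> hom C (cod C i) (cod C i')"
  unfolding is_pushout_def hom_def by auto

lemma is_pullback_homs:
  "is_pullback C d f d' f' \<Longrightarrow>
     d \<in> hom C (dom C d) (cod C d) \<and> f \<in> hom C (dom C f) (cod C d) \<and>
     d' \<in> hom C (dom C d') (dom C f) \<and> f' \<in> hom C (dom C d') (dom C d)"
  unfolding is_pullback_def hom_def by auto

lemma is_pushout_factors:
  assumes "is_pushout C i f i' f'" "x \<in> Ob C"
    and "g \<in> hom C (cod C f) x" "h \<in> hom C (cod C i) x" "cmp C g f = cmp C h i"
  shows "\<exists>!u. u \<in> hom C (cod C i') x \<and> cmp C u i' = g \<and> cmp C u f' = h"
proof -
  have "\<forall>x \<in> Ob C. \<forall>g \<in> hom C (cod C f) x. \<forall>h \<in> hom C (cod C i) x. cmp C g f = cmp C h i \<longrightarrow>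
      (\<exists>!u. u \<in> hom C (cod C i') x \<and> cmp C u i' = g \<and> cmp C u f' = h)"
    using assms(1) unfolding is_pushout_def by (elim conjE)
  then show ?thesis using assms(2-) by blast
qed

lemma is_pullback_factors:
  assumes "is_pullback C d f d' f'" "x \<in> Ob C"
    and "g \<in> hom C x (dom C f)" "h \<in> hom C x (dom C d)" "cmp C f g = cmp C d h"
  shows "\<exists>!u. u \<in> hom C x (dom C d') \<and> cmp C d' u = g \<and> cmp C f' u = h"
proof -
  have "\<forall>x \<in> Ob C. \<forall>g \<in> hom C x (dom C f). \<forall>h \<in> hom C x (dom C d). cmp C f g = cmp C d h \<longrightarrow>
      (\<exists>!u. u \<in> hom C x (dom C d') \<and> cmp C d' u = g \<and> cmp C f' u = h)"
    using assms(1) unfolding is_pullback_def by (elim conjE)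
  then show ?thesis using assms(2-) by blast
qed

section \<open>Uniqueness of kernels, cokernels, pushouts and pullbacks\<close>

context
  fixes C :: "('o, 'm, 'x) addcat_scheme"
  assumes cat: "category C"
begin

lemma hom_dom_in_Ob: "f \<in> hom C a b \<Longrightarrow> a \<in> Ob C"
  using cat unfolding category_def hom_def by auto

lemma hom_cod_in_Ob: "f \<in> hom C a b \<Longrightarrow> b \<in> Ob C"
  using cat unfolding category_def hom_def by auto

lemma comp_in_hom: "f \<in> hom C a b \<Longrightarrow> g \<in> hom C b c \<Longrightarrow> cmp C g f \<in> hom C a c"
  using cat hom_dom_in_Ob hom_cod_in_Ob unfolding category_def by meson

lemma id_in_hom: "a \<in> Ob C \<Longrightarrow> idm C a \<in> hom C a a"
  using cat unfolding category_def by blast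

lemma comp_id_right: "f \<in> hom C a b \<Longrightarrow> cmp C f (idm C a) = f"
  using cat unfolding category_def hom_def by auto

lemma comp_id_left: "f \<in> hom C a b \<Longrightarrow> cmp C (idm C b) f = f"
  using cat unfolding category_def hom_def by auto

lemma comp_assoc: "f \<in> hom C a b \<Longrightarrow> g \<in> hom C b c \<Longrightarrow> h \<in> hom C c d \<Longrightarrow>
   cmp C h (cmp C g f) = cmp C (cmp C h g) f"
  using cat unfolding category_def hom_def by auto

lemma is_iso_id:
  assumes "a \<in> Ob C" shows "is_iso C (idm C a)"
proof -
  have "inverse_homs C (idm C a) (idm C a) a a"
    using id_in_hom[OF assms] comp_id_left[OF id_in_hom[OF assms]] by (simp add: inverse_homs_def)
  then show ?thesis by (rule is_iso_if_inverse_homs)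
qed

lemma is_kernel_transport:
  assumes K: "is_kernel C i d" and uv: "inverse_homs C u v (cod C i) B'"
  shows "is_kernel C (cmp C u i) (cmp C d v)"
proof -
  obtain a b c where i: "i \<in> hom C a b" and d: "d \<in> hom C b c"
    using is_kernel_homs[OF K] by blast
  have u: "u \<in> hom C b B'" and v: "v \<in> hom C B' b"
    and vu: "cmp C v u = idm C b" and uv': "cmp C u v = idm C B'"
    using uv i by (auto simp: inverse_homs_def hom_def)
  have ui: "cmp C u i \<in> hom C a B'" and dv: "cmp C d v \<in> hom C B' c"
    using comp_in_hom i u v d by auto
  have vui: "cmp C v (cmp C u i) = i"
    using comp_assoc[OF i u v] vu comp_id_left[OF i] by simp
  have "cmp C (cmp C d v) (cmp C u i) = cmp C d i"
    using comp_assoc[OF ui v d] vui by simp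
  then have zero: "cmp C (cmp C d v) (cmp C u i) = zer C a c"
    using is_kernel_zero[OF K i d] by simp
  show ?thesis
    unfolding is_kernel_def
  proof (intro conjI ballI impI)
    show "cmp C u i \<in> Mor C" "cmp C d v \<in> Mor C" "cod C (cmp C u i) = dom C (cmp C d v)"
      "cmp C (cmp C d v) (cmp C u i) = zer C (dom C (cmp C u i)) (cod C (cmp C d v))"
      using zero ui dv by (auto simp: hom_def)
    fix x f assume x: "x \<in> Ob C" and "f \<in> hom C x (dom C (cmp C d v))"
      and fz: "cmp C (cmp C d v) f = zer C x (cod C (cmp C d v))"
    then have f: "f \<in> hom C x B'" using dv by (auto simp: hom_def)
    have vf: "cmp C v f \<in> hom C x b" using comp_in_hom[OF f v] .
    have "cmp C d (cmp C v f) = zer C x c"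
      using fz comp_assoc[OF f v d] dv by (auto simp: hom_def)
    then obtain g where g: "g \<in> hom C x a" "cmp C i g = cmp C v f"
      and g_unique: "\<And>g'. g' \<in> hom C x a \<Longrightarrow> cmp C i g' = cmp C v f \<Longrightarrow> g' = g"
      using is_kernel_factors[OF K i d x vf] by blast
    show "\<exists>!g. g \<in> hom C x (dom C (cmp C u i)) \<and> cmp C (cmp C u i) g = f"
    proof (rule ex1I[of _ g])
      have "cmp C (cmp C u i) g = cmp C (cmp C u v) f"
        using comp_assoc[OF g(1) i u] g(2) comp_assoc[OF f v u] by simp
      then show "g \<in> hom C x (dom C (cmp C u i)) \<and> cmp C (cmp C u i) g = f"
        using g ui uv' comp_id_left[OF f] by (auto simp: hom_def)
    next
      fix g' assume g': "g' \<in> hom C x (dom C (cmp C u i)) \<and> cmp C (cmp C u i) g' = f"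
      then have g'_hom: "g' \<in> hom C x a" using ui by (auto simp: hom_def)
      have "cmp C i g' = cmp C v (cmp C (cmp C u i) g')"
        using comp_assoc[OF g'_hom ui v] vui by simp
      then show "g' = g" using g_unique g'_hom g' by simp
    qed
  qed
qed

lemma is_cokernel_transport:
  assumes Q: "is_cokernel C d i" and uv: "inverse_homs C u v (cod C i) B'"
  shows "is_cokernel C (cmp C d v) (cmp C u i)"
proof -
  obtain a b c where i: "i \<in> hom C a b" and d: "d \<in> hom C b c"
    using is_cokernel_homs[OF Q] by blast
  have u: "u \<in> hom C b B'" and v: "v \<in> hom C B' b"
    and vu: "cmp C v u = idm C b" and uv': "cmp C u v = idm C B'"
    using uv i by (auto simp: inverse_homs_def hom_def)
  have ui: "cmp C u i \<in> hom C a B'" and dv: "cmp C d v \<in> hom C B' c"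
    using comp_in_hom i u v d by auto
  have dvu: "cmp C (cmp C d v) u = d"
    using comp_assoc[OF u v d] vu comp_id_right[OF d] by simp
  have "cmp C (cmp C d v) (cmp C u i) = cmp C d i"
    using comp_assoc[OF i u dv] dvu by simp
  then have zero: "cmp C (cmp C d v) (cmp C u i) = zer C a c"
    using is_cokernel_zero[OF Q i d] by simp
  show ?thesis
    unfolding is_cokernel_def
  proof (intro conjI ballI impI)
    show "cmp C u i \<in> Mor C" "cmp C d v \<in> Mor C" "cod C (cmp C u i) = dom C (cmp C d v)"
      "cmp C (cmp C d v) (cmp C u i) = zer C (dom C (cmp C u i)) (cod C (cmp C d v))"
      using zero ui dv by (auto simp: hom_def)
    fix x f assume x: "x \<in> Ob C" and "f \<in> hom C (cod C (cmp C u i)) x"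
      and fz: "cmp C f (cmp C u i) = zer C (dom C (cmp C u i)) x"
    then have f: "f \<in> hom C B' x" using ui by (auto simp: hom_def)
    have fu: "cmp C f u \<in> hom C b x" using comp_in_hom[OF u f] .
    have "cmp C (cmp C f u) i = zer C a x"
      using fz comp_assoc[OF i u f] ui by (auto simp: hom_def)
    then obtain g where g: "g \<in> hom C c x" "cmp C g d = cmp C f u"
      and g_unique: "\<And>g'. g' \<in> hom C c x \<Longrightarrow> cmp C g' d = cmp C f u \<Longrightarrow> g' = g"
      using is_cokernel_factors[OF Q i d x fu] by blast
    show "\<exists>!g. g \<in> hom C (cod C (cmp C d v)) x \<and> cmp C g (cmp C d v) = f"
    proof (rule ex1I[of _ g])
      have "cmp C g (cmp C d v) = cmp C f (cmp C u v)"
        using comp_assoc[OF v d g(1)] g(2) comp_assoc[OF v u f] by simp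
      then show "g \<in> hom C (cod C (cmp C d v)) x \<and> cmp C g (cmp C d v) = f"
        using g dv uv' comp_id_right[OF f] by (auto simp: hom_def)
    next
      fix g' assume g': "g' \<in> hom C (cod C (cmp C d v)) x \<and> cmp C g' (cmp C d v) = f"
      then have g'_hom: "g' \<in> hom C c x" using dv by (auto simp: hom_def)
      have "cmp C g' d = cmp C (cmp C g' (cmp C d v)) u"
        using comp_assoc[OF u dv g'_hom] dvu by simp
      then show "g' = g" using g_unique g'_hom g' by simp
    qed
  qed
qed

lemma kc_pair_transport:
  "kc_pair C (i, d) \<Longrightarrow> inverse_homs C u v (cod C i) B' \<Longrightarrow> kc_pair C (cmp C u i, cmp C d v)"
  using is_kernel_transport is_cokernel_transport by (simp add: kc_pair_def)

lemma cokernel_unique: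
  assumes Q: "is_cokernel C d i" and Q': "is_cokernel C d' i"
  shows "\<exists>u v. inverse_homs C u v (cod C d) (cod C d') \<and> d' = cmp C u d"
proof -
  obtain a b where i: "i \<in> hom C a b" using is_cokernel_homs[OF Q] by blast
  define c c' where "c = cod C d" and "c' = cod C d'"
  have d: "d \<in> hom C b c" and d': "d' \<in> hom C b c'"
    using is_cokernel_homs[OF Q] is_cokernel_homs[OF Q'] i by (auto simp: c_def c'_def hom_def)
  have c: "c \<in> Ob C" and c': "c' \<in> Ob C" using hom_cod_in_Ob d d' by auto
  have di: "cmp C d i = zer C a c" and d'i: "cmp C d' i = zer C a c'"
    using is_cokernel_zero[OF Q i d] is_cokernel_zero[OF Q' i d'] .
  obtain u where u: "u \<in> hom C c c'" "cmp C u d = d'"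
    using is_cokernel_factors[OF Q i d c' d' d'i] by blast
  obtain v where v: "v \<in> hom C c' c" "cmp C v d' = d"
    using is_cokernel_factors[OF Q' i d' c d di] by blast
  have "cmp C (cmp C v u) d = d"
    using comp_assoc[OF d u(1) v(1)] u(2) v(2) by simp
  then have vu: "cmp C v u = idm C c"
    using is_cokernel_factors[OF Q i d c d di] comp_in_hom[OF u(1) v(1)] id_in_hom[OF c]
      comp_id_left[OF d] by blast
  have "cmp C (cmp C u v) d' = d'"
    using comp_assoc[OF d' v(1) u(1)] u(2) v(2) by simp
  then have uv: "cmp C u v = idm C c'"
    using is_cokernel_factors[OF Q' i d' c' d' d'i] comp_in_hom[OF v(1) u(1)] id_in_hom[OF c']
      comp_id_left[OF d'] by blast
  show ?thesis
    using u v vu uv unfolding inverse_homs_def c_def c'_def by blast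
qed

lemma kernel_unique:
  assumes K: "is_kernel C i d" and K': "is_kernel C i' d"
  shows "\<exists>u v. inverse_homs C u v (dom C i') (dom C i) \<and> i' = cmp C i u"
proof -
  obtain c where d: "d \<in> hom C (cod C i) c" using is_kernel_homs[OF K] by blast
  define a a' b where "a = dom C i" and "a' = dom C i'" and "b = cod C i"
  have i: "i \<in> hom C a b" and i': "i' \<in> hom C a' b" and d: "d \<in> hom C b c"
    using is_kernel_homs[OF K] is_kernel_homs[OF K'] d by (auto simp: a_def a'_def b_def hom_def)
  have a: "a \<in> Ob C" and a': "a' \<in> Ob C" using hom_dom_in_Ob i i' by auto
  have di: "cmp C d i = zer C a c" and di': "cmp C d i' = zer C a' c"
    using is_kernel_zero[OF K i d] is_kernel_zero[OF K' i' d] .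
  obtain u where u: "u \<in> hom C a' a" "cmp C i u = i'"
    using is_kernel_factors[OF K i d a' i' di'] by blast
  obtain v where v: "v \<in> hom C a a'" "cmp C i' v = i"
    using is_kernel_factors[OF K' i' d a i di] by blast
  have "cmp C i (cmp C u v) = i"
    using comp_assoc[OF v(1) u(1) i] u(2) v(2) by simp
  then have uv: "cmp C u v = idm C a"
    using is_kernel_factors[OF K i d a i di] comp_in_hom[OF v(1) u(1)] id_in_hom[OF a]
      comp_id_right[OF i] by blast
  have "cmp C i' (cmp C v u) = i'"
    using comp_assoc[OF u(1) v(1) i'] u(2) v(2) by simp
  then have vu: "cmp C v u = idm C a'"
    using is_kernel_factors[OF K' i' d a' i' di'] comp_in_hom[OF u(1) v(1)] id_in_hom[OF a']
      comp_id_right[OF i'] by blast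
  show ?thesis
    using u v vu uv unfolding inverse_homs_def a_def a'_def by blast
qed

lemma pushout_unique:
  assumes P1: "is_pushout C i f i1 f1" and P2: "is_pushout C i f i2 f2"
  shows "\<exists>u v. inverse_homs C u v (cod C i1) (cod C i2) \<and> cmp C u i1 = i2"
proof -
  define p1 p2 where "p1 = cod C i1" and "p2 = cod C i2"
  have i1: "i1 \<in> hom C (cod C f) p1" and f1: "f1 \<in> hom C (cod C i) p1"
    and i2: "i2 \<in> hom C (cod C f) p2" and f2: "f2 \<in> hom C (cod C i) p2"
    using is_pushout_homs[OF P1] is_pushout_homs[OF P2] by (simp_all add: p1_def p2_def)
  have p1: "p1 \<in> Ob C" and p2: "p2 \<in> Ob C" using hom_cod_in_Ob i1 i2 by auto
  have sq1: "cmp C i1 f = cmp C f1 i" and sq2: "cmp C i2 f = cmp C f2 i"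
    using P1 P2 by (simp_all add: is_pushout_def)
  obtain u where u: "u \<in> hom C p1 p2" "cmp C u i1 = i2" "cmp C u f1 = f2"
    using is_pushout_factors[OF P1 p2 i2 f2 sq2] p1_def by blast
  obtain v where v: "v \<in> hom C p2 p1" "cmp C v i2 = i1" "cmp C v f2 = f1"
    using is_pushout_factors[OF P2 p1 i1 f1 sq1] p2_def by blast
  have "cmp C (cmp C v u) i1 = i1" "cmp C (cmp C v u) f1 = f1"
    using comp_assoc[OF i1 u(1) v(1)] comp_assoc[OF f1 u(1) v(1)] u v by simp_all
  then have vu: "cmp C v u = idm C p1"
    using is_pushout_factors[OF P1 p1 i1 f1 sq1] comp_in_hom[OF u(1) v(1)] id_in_hom[OF p1]
      comp_id_left[OF i1] comp_id_left[OF f1] p1_def by blast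
  have "cmp C (cmp C u v) i2 = i2" "cmp C (cmp C u v) f2 = f2"
    using comp_assoc[OF i2 v(1) u(1)] comp_assoc[OF f2 v(1) u(1)] u v by simp_all
  then have uv: "cmp C u v = idm C p2"
    using is_pushout_factors[OF P2 p2 i2 f2 sq2] comp_in_hom[OF v(1) u(1)] id_in_hom[OF p2]
      comp_id_left[OF i2] comp_id_left[OF f2] p2_def by blast
  show ?thesis
    using u v vu uv unfolding inverse_homs_def p1_def p2_def by blast
qed

lemma pullback_unique:
  assumes P1: "is_pullback C d f d1 f1" and P2: "is_pullback C d f d2 f2"
  shows "\<exists>u v. inverse_homs C u v (dom C d2) (dom C d1) \<and> d2 = cmp C d1 u"
proof -
  define p1 p2 where "p1 = dom C d1" and "p2 = dom C d2"
  have d1: "d1 \<in> hom C p1 (dom C f)" and f1: "f1 \<in> hom C p1 (dom C d)"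
    and d2: "d2 \<in> hom C p2 (dom C f)" and f2: "f2 \<in> hom C p2 (dom C d)"
    using is_pullback_homs[OF P1] is_pullback_homs[OF P2] by (simp_all add: p1_def p2_def)
  have p1: "p1 \<in> Ob C" and p2: "p2 \<in> Ob C" using hom_dom_in_Ob d1 d2 by auto
  have sq1: "cmp C f d1 = cmp C d f1" and sq2: "cmp C f d2 = cmp C d f2"
    using P1 P2 by (simp_all add: is_pullback_def)
  obtain u where u: "u \<in> hom C p2 p1" "cmp C d1 u = d2" "cmp C f1 u = f2"
    using is_pullback_factors[OF P1 p2 d2 f2 sq2] p1_def by blast
  obtain v where v: "v \<in> hom C p1 p2" "cmp C d2 v = d1" "cmp C f2 v = f1"
    using is_pullback_factors[OF P2 p1 d1 f1 sq1] p2_def by blast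
  have "cmp C d2 (cmp C v u) = d2" "cmp C f2 (cmp C v u) = f2"
    using comp_assoc[OF u(1) v(1) d2] comp_assoc[OF u(1) v(1) f2] u v by simp_all
  then have vu: "cmp C v u = idm C p2"
    using is_pullback_factors[OF P2 p2 d2 f2 sq2] comp_in_hom[OF u(1) v(1)] id_in_hom[OF p2]
      comp_id_right[OF d2] comp_id_right[OF f2] p2_def by blast
  have "cmp C d1 (cmp C u v) = d1" "cmp C f1 (cmp C u v) = f1"
    using comp_assoc[OF v(1) u(1) d1] comp_assoc[OF v(1) u(1) f1] u v by simp_all
  then have uv: "cmp C u v = idm C p1"
    using is_pullback_factors[OF P1 p1 d1 f1 sq1] comp_in_hom[OF v(1) u(1)] id_in_hom[OF p1]
      comp_id_right[OF d1] comp_id_right[OF f1] p1_def by blast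
  show ?thesis
    using u v vu uv unfolding inverse_homs_def p1_def p2_def by blast
qed

end

section \<open>Exact structures\<close>

context
  fixes C :: "('o, 'm, 'x) addcat_scheme" and E :: "('m \<times> 'm) set"
  assumes E: "exact_structure C E"
begin

lemma exact_structure_kc_pair: "p \<in> E \<Longrightarrow> kc_pair C p"
  using E unfolding exact_structure_def by blast

lemma exact_structure_iso_closed: "p \<in> E \<Longrightarrow> kc_pair C q \<Longrightarrow> kc_iso C p q \<Longrightarrow> q \<in> E"
  using E unfolding exact_structure_def by blast

lemma exact_structure_adm_id:
  "a \<in> Ob C \<Longrightarrow> adm_monic C E (idm C a) \<and> adm_epic C E (idm C a)"
  using E unfolding exact_structure_def by blast

lemma exact_structure_adm_monic_comp:
  "adm_monic C E i \<Longrightarrow> adm_monic C E i' \<Longrightarrow> cod C i = dom C i' \<Longrightarrow> adm_monic C E (cmp C i' i)"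
  using E unfolding exact_structure_def by blast

lemma exact_structure_adm_epic_comp:
  "adm_epic C E d \<Longrightarrow> adm_epic C E d' \<Longrightarrow> cod C d = dom C d' \<Longrightarrow> adm_epic C E (cmp C d' d)"
  using E unfolding exact_structure_def by blast

lemma exact_structure_pushout:
  "adm_monic C E i \<Longrightarrow> f \<in> Mor C \<Longrightarrow> dom C f = dom C i \<Longrightarrow>
     \<exists>i' f'. is_pushout C i f i' f' \<and> adm_monic C E i'"
  using E unfolding exact_structure_def by blast

lemma exact_structure_pullback:
  "adm_epic C E d \<Longrightarrow> f \<in> Mor C \<Longrightarrow> cod C f = cod C d \<Longrightarrow>
     \<exists>d' f'. is_pullback C d f d' f' \<and> adm_epic C E d'"
  using E unfolding exact_structure_def by blast

lemma exact_structure_kc_homs: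
  "(i, d) \<in> E \<Longrightarrow> i \<in> hom C (dom C i) (cod C i) \<and> d \<in> hom C (cod C i) (cod C d)"
  using exact_structure_kc_pair[of "(i, d)"] is_kernel_homs[of C i d] by (simp add: kc_pair_def)

end

context
  fixes C :: "('o, 'm, 'x) addcat_scheme" and E :: "('m \<times> 'm) set"
  assumes cat: "category C" and E: "exact_structure C E"
begin

lemma exact_structure_transport:
  assumes p: "(i, d) \<in> E" and uv: "inverse_homs C u v (cod C i) B'"
  shows "(cmp C u i, cmp C d v) \<in> E"
proof -
  obtain a b c where i: "i \<in> hom C a b" and d: "d \<in> hom C b c"
    using exact_structure_kc_homs[OF E p] by blast
  have u: "u \<in> hom C b B'" and v: "v \<in> hom C B' b" and vu: "cmp C v u = idm C b"
    using uv i by (auto simp: inverse_homs_def hom_def)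
  have ui: "cmp C u i \<in> hom C a B'" and dv: "cmp C d v \<in> hom C B' c"
    using comp_in_hom[OF cat] i u v d by auto
  have a: "a \<in> Ob C" and c: "c \<in> Ob C" using hom_dom_in_Ob[OF cat i] hom_cod_in_Ob[OF cat d] .
  have "cmp C (cmp C d v) u = cmp C (idm C c) d"
    using comp_assoc[OF cat u v d] vu comp_id_right[OF cat d] comp_id_left[OF cat d] by simp
  then have "kc_iso C (i, d) (cmp C u i, cmp C d v)"
    using kc_isoI[of "idm C a" C i "cmp C u i" u "idm C c" d "cmp C d v"]
      id_in_hom[OF cat] is_iso_id[OF cat] is_iso_if_inverse_homs[OF uv] a c i d u ui dv
      comp_id_right[OF cat ui]
    by (simp add: hom_def)
  moreover have "kc_pair C (cmp C u i, cmp C d v)"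
    using kc_pair_transport[OF cat exact_structure_kc_pair[OF E p] uv] .
  ultimately show ?thesis using exact_structure_iso_closed[OF E p] by blast
qed

lemma exact_structure_replace_cokernel:
  assumes p: "(i, d) \<in> E" and kc': "kc_pair C (i, d')"
  shows "(i, d') \<in> E"
proof -
  have "is_cokernel C d i" "is_cokernel C d' i"
    using exact_structure_kc_pair[OF E p] kc' by (simp_all add: kc_pair_def)
  then obtain u v where uv: "inverse_homs C u v (cod C d) (cod C d')" and d': "d' = cmp C u d"
    using cokernel_unique[OF cat] by blast
  obtain a b c where i: "i \<in> hom C a b" and d: "d \<in> hom C b c"
    using exact_structure_kc_homs[OF E p] by blast
  have a: "a \<in> Ob C" and b: "b \<in> Ob C" using hom_dom_in_Ob[OF cat i] hom_cod_in_Ob[OF cat i] .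
  have "kc_iso C (i, d) (i, d')"
    using kc_isoI[of "idm C a" C i i "idm C b" u d d'] uv d' i d
      id_in_hom[OF cat] is_iso_id[OF cat] is_iso_if_inverse_homs[OF uv] a b
      comp_id_right[OF cat i] comp_id_left[OF cat i] comp_id_right[OF cat comp_in_hom[OF cat d]]
    by (simp add: hom_def inverse_homs_def)
  then show ?thesis using exact_structure_iso_closed[OF E p kc'] by blast
qed

lemma exact_structure_replace_kernel:
  assumes p: "(i, d) \<in> E" and kc': "kc_pair C (i', d)"
  shows "(i', d) \<in> E"
proof -
  have "is_kernel C i d" "is_kernel C i' d"
    using exact_structure_kc_pair[OF E p] kc' by (simp_all add: kc_pair_def)
  then obtain u v where uv: "inverse_homs C u v (dom C i') (dom C i)" and i': "i' = cmp C i u"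
    using kernel_unique[OF cat] by blast
  obtain a b c where i: "i \<in> hom C a b" and d: "d \<in> hom C b c"
    using exact_structure_kc_homs[OF E p] by blast
  have b: "b \<in> Ob C" and c: "c \<in> Ob C" using hom_cod_in_Ob[OF cat i] hom_cod_in_Ob[OF cat d] .
  have u: "u \<in> hom C (dom C i') a" and v: "v \<in> hom C a (dom C i')"
    and uv': "cmp C u v = idm C a"
    using uv i by (auto simp: inverse_homs_def hom_def)
  have "cmp C i' v = i"
    using i' comp_assoc[OF cat v u i] uv' comp_id_right[OF cat i] by simp
  then have "kc_iso C (i, d) (i', d)"
    using kc_isoI[of v C i i' "idm C b" "idm C c" d d] i' v i d
      id_in_hom[OF cat] is_iso_id[OF cat] is_iso_if_inverse_homs[OF inverse_homs_sym[OF uv]] b c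
      comp_id_left[OF cat i] comp_id_left[OF cat d] comp_id_right[OF cat d] comp_in_hom[OF cat u i]
    by (simp add: hom_def)
  then show ?thesis using exact_structure_iso_closed[OF E p kc'] by blast
qed

lemma adm_monic_pushout_choice:
  assumes P1: "is_pushout C i f i1 f1" and "adm_monic C E i1" and P2: "is_pushout C i f i2 f2"
  shows "adm_monic C E i2"
proof -
  obtain e where "(i1, e) \<in> E" using assms(2) by (auto simp: adm_monic_def)
  moreover obtain u v where "inverse_homs C u v (cod C i1) (cod C i2)" "cmp C u i1 = i2"
    using pushout_unique[OF cat P1 P2] by blast
  ultimately have "(i2, cmp C e v) \<in> E" using exact_structure_transport by metis
  then show ?thesis by (auto simp: adm_monic_def)
qed

lemma adm_epic_pullback_choice:
  assumes P1: "is_pullback C d f d1 f1" and "adm_epic C E d1" and P2: "is_pullback C d f d2 f2"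
  shows "adm_epic C E d2"
proof -
  obtain k where k: "(k, d1) \<in> E" using assms(2) by (auto simp: adm_epic_def)
  then have "cod C k = dom C d1" using exact_structure_kc_homs[OF E k] by (simp add: hom_def)
  moreover obtain u v where uv: "inverse_homs C u v (dom C d2) (dom C d1)" and d2: "d2 = cmp C d1 u"
    using pullback_unique[OF cat P1 P2] by blast
  ultimately have "(cmp C v k, d2) \<in> E"
    using exact_structure_transport[OF k] inverse_homs_sym[OF uv] by simp
  then show ?thesis by (auto simp: adm_epic_def)
qed

end

section \<open>Intersections of exact structures\<close>

locale exact_family =
  fixes C :: "('o, 'm, 'x) addcat_scheme" and \<Omega> :: "'i set" and E :: "'i \<Rightarrow> ('m \<times> 'm) set"
  assumes category: "category C"
    and nonempty: "\<Omega> \<noteq> {}"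
    and exact: "\<And>\<omega>. \<omega> \<in> \<Omega> \<Longrightarrow> exact_structure C (E \<omega>)"
begin

lemma adm_monic_INT_iff:
  "adm_monic C (\<Inter>\<omega>\<in>\<Omega>. E \<omega>) i \<longleftrightarrow> (\<forall>\<omega>\<in>\<Omega>. adm_monic C (E \<omega>) i)"
proof
  assume all: "\<forall>\<omega>\<in>\<Omega>. adm_monic C (E \<omega>) i"
  obtain \<omega>\<^sub>0 d where \<omega>\<^sub>0: "\<omega>\<^sub>0 \<in> \<Omega>" and d: "(i, d) \<in> E \<omega>\<^sub>0"
    using nonempty all unfolding adm_monic_def by blast
  have "(i, d) \<in> E \<omega>" if \<omega>: "\<omega> \<in> \<Omega>" for \<omega>
  proof -
    obtain d' where "(i, d') \<in> E \<omega>" using all \<omega> by (auto simp: adm_monic_def)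
    then show ?thesis
      using exact_structure_replace_cokernel[OF category exact[OF \<omega>]]
        exact_structure_kc_pair[OF exact[OF \<omega>\<^sub>0] d] by blast
  qed
  then show "adm_monic C (\<Inter>\<omega>\<in>\<Omega>. E \<omega>) i" by (auto simp: adm_monic_def)
qed (auto simp: adm_monic_def)

lemma adm_epic_INT_iff:
  "adm_epic C (\<Inter>\<omega>\<in>\<Omega>. E \<omega>) d \<longleftrightarrow> (\<forall>\<omega>\<in>\<Omega>. adm_epic C (E \<omega>) d)"
proof
  assume all: "\<forall>\<omega>\<in>\<Omega>. adm_epic C (E \<omega>) d"
  obtain \<omega>\<^sub>0 i where \<omega>\<^sub>0: "\<omega>\<^sub>0 \<in> \<Omega>" and i: "(i, d) \<in> E \<omega>\<^sub>0"
    using nonempty all unfolding adm_epic_def by blast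
  have "(i, d) \<in> E \<omega>" if \<omega>: "\<omega> \<in> \<Omega>" for \<omega>
  proof -
    obtain i' where "(i', d) \<in> E \<omega>" using all \<omega> by (auto simp: adm_epic_def)
    then show ?thesis
      using exact_structure_replace_kernel[OF category exact[OF \<omega>]]
        exact_structure_kc_pair[OF exact[OF \<omega>\<^sub>0] i] by blast
  qed
  then show "adm_epic C (\<Inter>\<omega>\<in>\<Omega>. E \<omega>) d" by (auto simp: adm_epic_def)
qed (auto simp: adm_epic_def)

lemma pushout_adm_monic_INT:
  assumes i: "adm_monic C (\<Inter>\<omega>\<in>\<Omega>. E \<omega>) i" and f: "f \<in> Mor C" "dom C f = dom C i"
  shows "\<exists>i' f'. is_pushout C i f i' f' \<and> adm_monic C (\<Inter>\<omega>\<in>\<Omega>. E \<omega>) i'"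
proof -
  have i: "\<And>\<omega>. \<omega> \<in> \<Omega> \<Longrightarrow> adm_monic C (E \<omega>) i" using i adm_monic_INT_iff by blast
  obtain \<omega>\<^sub>0 where \<omega>\<^sub>0: "\<omega>\<^sub>0 \<in> \<Omega>" using nonempty by blast
  obtain i' f' where P: "is_pushout C i f i' f'" and "adm_monic C (E \<omega>\<^sub>0) i'"
    using exact_structure_pushout[OF exact[OF \<omega>\<^sub>0] i[OF \<omega>\<^sub>0] f] by blast
  have "adm_monic C (E \<omega>) i'" if \<omega>: "\<omega> \<in> \<Omega>" for \<omega>
    using exact_structure_pushout[OF exact[OF \<omega>] i[OF \<omega>] f]
      adm_monic_pushout_choice[OF category exact[OF \<omega>] _ _ P] by blast
  then show ?thesis using P adm_monic_INT_iff by blast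
qed

lemma pullback_adm_epic_INT:
  assumes d: "adm_epic C (\<Inter>\<omega>\<in>\<Omega>. E \<omega>) d" and f: "f \<in> Mor C" "cod C f = cod C d"
  shows "\<exists>d' f'. is_pullback C d f d' f' \<and> adm_epic C (\<Inter>\<omega>\<in>\<Omega>. E \<omega>) d'"
proof -
  have d: "\<And>\<omega>. \<omega> \<in> \<Omega> \<Longrightarrow> adm_epic C (E \<omega>) d" using d adm_epic_INT_iff by blast
  obtain \<omega>\<^sub>0 where \<omega>\<^sub>0: "\<omega>\<^sub>0 \<in> \<Omega>" using nonempty by blast
  obtain d' f' where P: "is_pullback C d f d' f'" and "adm_epic C (E \<omega>\<^sub>0) d'"
    using exact_structure_pullback[OF exact[OF \<omega>\<^sub>0] d[OF \<omega>\<^sub>0] f] by blast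
  have "adm_epic C (E \<omega>) d'" if \<omega>: "\<omega> \<in> \<Omega>" for \<omega>
    using exact_structure_pullback[OF exact[OF \<omega>] d[OF \<omega>] f]
      adm_epic_pullback_choice[OF category exact[OF \<omega>] _ _ P] by blast
  then show ?thesis using P adm_epic_INT_iff by blast
qed

lemma exact_structure_INT: "exact_structure C (\<Inter>\<omega>\<in>\<Omega>. E \<omega>)"
  unfolding exact_structure_def
proof (intro conjI ballI allI impI)
  fix p assume p: "p \<in> (\<Inter>\<omega>\<in>\<Omega>. E \<omega>)"
  obtain \<omega>\<^sub>0 where \<omega>\<^sub>0: "\<omega>\<^sub>0 \<in> \<Omega>" using nonempty by blast
  show "kc_pair C p" using exact_structure_kc_pair[OF exact[OF \<omega>\<^sub>0]] p \<omega>\<^sub>0 by blast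
next
  fix p q assume "p \<in> (\<Inter>\<omega>\<in>\<Omega>. E \<omega>)" and "kc_pair C q \<and> kc_iso C p q"
  then show "q \<in> (\<Inter>\<omega>\<in>\<Omega>. E \<omega>)" using exact_structure_iso_closed[OF exact] by blast
next
  fix a assume "a \<in> Ob C"
  then show "adm_monic C (\<Inter>\<omega>\<in>\<Omega>. E \<omega>) (idm C a)" "adm_epic C (\<Inter>\<omega>\<in>\<Omega>. E \<omega>) (idm C a)"
    unfolding adm_monic_INT_iff adm_epic_INT_iff using exact_structure_adm_id[OF exact] by blast+
next
  fix i i' assume "adm_monic C (\<Inter>\<omega>\<in>\<Omega>. E \<omega>) i \<and> adm_monic C (\<Inter>\<omega>\<in>\<Omega>. E \<omega>) i' \<and> cod C i = dom C i'"
  then show "adm_monic C (\<Inter>\<omega>\<in>\<Omega>. E \<omega>) (cmp C i' i)"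
    unfolding adm_monic_INT_iff using exact_structure_adm_monic_comp[OF exact] by blast
next
  fix d d' assume "adm_epic C (\<Inter>\<omega>\<in>\<Omega>. E \<omega>) d \<and> adm_epic C (\<Inter>\<omega>\<in>\<Omega>. E \<omega>) d' \<and> cod C d = dom C d'"
  then show "adm_epic C (\<Inter>\<omega>\<in>\<Omega>. E \<omega>) (cmp C d' d)"
    unfolding adm_epic_INT_iff using exact_structure_adm_epic_comp[OF exact] by blast
next
  fix i f assume "adm_monic C (\<Inter>\<omega>\<in>\<Omega>. E \<omega>) i \<and> f \<in> Mor C \<and> dom C f = dom C i"
  then show "\<exists>i' f'. is_pushout C i f i' f' \<and> adm_monic C (\<Inter>\<omega>\<in>\<Omega>. E \<omega>) i'"
    using pushout_adm_monic_INT by blast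
next
  fix d f assume "adm_epic C (\<Inter>\<omega>\<in>\<Omega>. E \<omega>) d \<and> f \<in> Mor C \<and> cod C f = cod C d"
  then show "\<exists>d' f'. is_pullback C d f d' f' \<and> adm_epic C (\<Inter>\<omega>\<in>\<Omega>. E \<omega>) d'"
    using pullback_adm_epic_INT by blast
qed

end

theorem lemma5p2:
  fixes C :: "('o, 'm) addcat" and \<Omega> :: "'i set" and E :: "'i \<Rightarrow> ('m \<times> 'm) set"
  assumes "additive_category C"
    and "\<Omega> \<noteq> {}"
    and "\<And>\<omega>. \<omega> \<in> \<Omega> \<Longrightarrow> exact_structure C (E \<omega>)"
  shows "exact_structure C (\<Inter>\<omega>\<in>\<Omega>. E \<omega>)"
proof -
  have "category C" using assms(1) by (simp add: additive_category_def preadditive_def)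
  then interpret exact_family C \<Omega> E using assms(2,3) by unfold_locales
  show ?thesis by (rule exact_structure_INT)
qed

end
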